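(* Let $m\geq1$, $N\in(\mathbb{N}^* )^m$, let $A\subseteq\mathcal{Z}^m$ be a largely continuous precell mod $N$, $X=\widehat A$ its socle, $(\mu,\nu,\rho)$ a largely continuous presentation of $A$, and $f$ a largely continuous affine map on $A$ such that $\bar f=+\infty$ on $\partial A$. Let $(\alpha_i)_{1\leq i\leq m}\in\mathbb{Q}^m$ and $\beta\in\mathcal{Q}$ be such that $f(a)=\beta+\sum_{1\leq i\leq m}\alpha_ia_i$ on $A$, and extend $f$ to $\mathcal{Q}^m$ by this expression. For every $x\in X$ let $\hat f(x)=f(x,\mu(x))$ if $\alpha_m\geq0$, and $\hat f(x)=f(x,\nu(x))$ otherwise. Then $\hat f$ is a well-defined largely continuous affine map on $X$ with limit $+\infty$ at every point of $\partial X$, and $\min f(A)-|\alpha_m|N_m\leq\hat f(\widehat a)\leq f(a)$ for every $a\in A$.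
   Context: $\mathcal{Z}$ is a $\mathbb{Z}$-group (linearly ordered abelian group with smallest positive element $1$, $|\mathcal{Z}/n\mathcal{Z}|=n$ for all $n\geq1$), $\mathcal{Q}$ its divisible hull ($\mathbb{Q}\subseteq\mathcal{Q}$), $\Gamma=\mathcal{Z}\cup\{+\infty\}$, $\Omega=\mathcal{Q}\cup\{+\infty\}$, $+\infty$ maximal and absorbing for $+$; $|a|=\max(a,-a)$. Topology on $\Omega$ generated by open intervals and $]a,+\infty]$; product topology on $\Omega^m$; $\overline A$ closure; frontier $\partial A$ = closure of $\overline A\setminus A$. Socle $\widehat a=(a_1,\dots,a_{m-1})$, $\widehat A$; $\widehat N=(N_1,\dots,N_{m-1})$. $F_I(\Gamma^m)$: points whose non-$+\infty$ coordinates are exactly those in $I$. Congruence: $a\equiv b\,[n]$ iff $a-b\in n\mathcal{Z}$, and $a\equiv+\infty\,[n]$ always. For $Y\subseteq F_K(\Gamma^k)$, $g:Y\to\Omega$ is affine if constantly $+\infty$ or $g(y)=\alpha_0+\sum_{i\in K}\alpha_iy_i$ ($\alpha_0\in\mathcal{Q}$, $\alpha_i\in\mathbb{Q}$); largely continuous if it extends to a continuous $\bar g$ on $\overline Y$. Largely continuous precells mod $N$: $\Gamma^0$ for $m=0$; for $m\geq1$, $A\subseteq F_I(\Gamma^m)$ such that $\widehat A$ is a largely continuous precell mod $\widehat N$ and for some non-negative largely continuous affine $\mu,\nu:\widehat A\to\Omega$ and integer $0\leq\rho<N_m$ (a largely continuous presentation), $A=\{a\in F_I(\Gamma^m):\widehat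 a\in\widehat A,\ \mu(\widehat a)\leq a_m\leq\nu(\widehat a),\ a_m\equiv\rho\,[N_m]\}$. *)

theory Defs
  imports "HOL-Analysis.Function_Topology"
begin

datatype 'a omega = Fin 'a | PInf

instantiation omega :: (linorder) linorder
begin
fun less_eq_omega :: "'a omega \<Rightarrow> 'a omega \<Rightarrow> bool" where
  "less_eq_omega (Fin a) (Fin b) = (a \<le> b)"
| "less_eq_omega _ PInf = True"
| "less_eq_omega PInf (Fin _) = False"
definition less_omega :: "'a omega \<Rightarrow> 'a omega \<Rightarrow> bool" where
  "less_omega x y = (x \<le> y \<and> \<not> y \<le> x)"
instance
proof
  fix x y z :: "'a omega"
  show "(x < y) = (x \<le> y \<and> \<not> y \<le> x)" by (simp add: less_omega_def)
  show "x \<le> x" by (cases x) auto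
  show "x \<le> y \<Longrightarrow> y \<le> z \<Longrightarrow> x \<le> z" by (cases x; cases y; cases z) auto
  show "x \<le> y \<Longrightarrow> y \<le> x \<Longrightarrow> x = y" by (cases x; cases y) auto
  show "x \<le> y \<or> y \<le> x" by (cases x; cases y) auto
qed
end

instantiation omega :: (linorder) linorder_topology
begin
definition open_omega :: "'a omega set \<Rightarrow> bool" where
  "open_omega = generate_topology (range (\<lambda>a. {..< a}) \<union> range (\<lambda>a. {a <..}))"
instance by standard (simp add: open_omega_def)
end

fun the_fin :: "'a::zero omega \<Rightarrow> 'a" where
  "the_fin (Fin a) = a"
| "the_fin PInf = 0"

definition nmul :: "nat \<Rightarrow> 'a::ab_group_add \<Rightarrow> 'a" where
  "nmul n x = (\<Sum>i<n. x)"

definition zmul :: "int \<Rightarrow> 'a::ab_group_add \<Rightarrow> 'a" where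
  "zmul k x = (if 0 \<le> k then nmul (nat k) x else - nmul (nat (- k)) x)"

text \<open>Multiplication by a rational in the divisible group Q (well defined since
Q is divisible and torsion-free).\<close>
definition rsc :: "rat \<Rightarrow> 'a::ab_group_add \<Rightarrow> 'a" where
  "rsc r x = (THE y. nmul (nat (snd (quotient_of r))) y = zmul (fst (quotient_of r)) x)"

text \<open>zgroup_hull Z e: the type 'a is Q, the divisible hull of the
Z-group Z, whose least positive element is e (the element 1; so r \<in> \<rat>
is identified with rsc r e).\<close>
definition zgroup_hull :: "'a::linordered_ab_group_add set \<Rightarrow> 'a \<Rightarrow> bool" where
  "zgroup_hull Z e \<longleftrightarrow>
     0 \<in> Z \<and> (\<forall>x\<in>Z. \<forall>y\<in>Z. x + y \<in> Z) \<and> (\<forall>x\<in>Z. - x \<in> Z) \<and>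
     e \<in> Z \<and> 0 < e \<and> (\<forall>z\<in>Z. 0 < z \<longrightarrow> e \<le> z) \<and>
     (\<forall>n::nat. n \<ge> 1 \<longrightarrow>
        card ((\<lambda>z. {w\<in>Z. z - w \<in> nmul n ` Z}) ` Z) = n) \<and>
     (\<forall>(x::'a) (n::nat). n \<ge> 1 \<longrightarrow> (\<exists>y. nmul n y = x)) \<and>
     (\<forall>x::'a. \<exists>n::nat. n \<ge> 1 \<and> nmul n x \<in> Z)"

text \<open>A point of Omega^m is represented as a function nat => 'a omega
whose coordinates 0..m-1 are the coordinates a_1..a_m and whose coordinates
\<ge> m are +\<infinity>. The topology is the product topology on such functions.\<close>

definition FI :: "'a set \<Rightarrow> nat set \<Rightarrow> (nat \<Rightarrow> 'a omega) set" where
  "FI Z I = {a. (\<forall>i\<in>I. a i \<in> Fin ` Z) \<and> (\<forall>i. i \<notin> I \<longrightarrow> a i = PInf)}"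

definition trunc :: "nat \<Rightarrow> (nat \<Rightarrow> 'a omega) \<Rightarrow> (nat \<Rightarrow> 'a omega)" where
  "trunc k a = (\<lambda>i. if i < k then a i else PInf)"

definition socle :: "nat \<Rightarrow> (nat \<Rightarrow> 'a omega) set \<Rightarrow> (nat \<Rightarrow> 'a omega) set" where
  "socle k A = trunc k ` A"

definition pfrontier :: "('b::topological_space) set \<Rightarrow> 'b set" where
  "pfrontier A = closure (closure A - A)"

definition congr :: "'a::ab_group_add set \<Rightarrow> 'a \<Rightarrow> 'a omega \<Rightarrow> nat \<Rightarrow> nat \<Rightarrow> bool" where
  "congr Z e x r n = (case x of PInf \<Rightarrow> True | Fin z \<Rightarrow> z - nmul r e \<in> nmul n ` Z)"

definition is_affine :: "'a::ab_group_add set \<Rightarrow> nat set \<Rightarrow> (nat \<Rightarrow> 'a omega) set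
     \<Rightarrow> ((nat \<Rightarrow> 'a omega) \<Rightarrow> 'a omega) \<Rightarrow> bool" where
  "is_affine Z K Y g \<longleftrightarrow> Y \<subseteq> FI Z K \<and>
     ((\<forall>y\<in>Y. g y = PInf) \<or>
      (\<exists>(\<alpha>0::'a) (\<alpha>::nat \<Rightarrow> rat). \<forall>y\<in>Y. g y = Fin (\<alpha>0 + (\<Sum>i\<in>K. rsc (\<alpha> i) (the_fin (y i))))))"

definition lcont :: "('b::topological_space) set \<Rightarrow> ('b \<Rightarrow> 'c::topological_space) \<Rightarrow> bool" where
  "lcont Y g \<longleftrightarrow> (\<exists>h. continuous_on (closure Y) h \<and> (\<forall>y\<in>Y. h y = g y))"

definition lc_pres :: "'a::linordered_ab_group_add set \<Rightarrow> 'a \<Rightarrow> nat \<Rightarrow> (nat \<Rightarrow> nat)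
    \<Rightarrow> (nat \<Rightarrow> 'a omega) set \<Rightarrow> ((nat \<Rightarrow> 'a omega) \<Rightarrow> 'a omega)
    \<Rightarrow> ((nat \<Rightarrow> 'a omega) \<Rightarrow> 'a omega) \<Rightarrow> nat \<Rightarrow> bool" where
  "lc_pres Z e m N A \<mu> \<nu> \<rho> \<longleftrightarrow> 1 \<le> m \<and>
     (\<exists>I \<subseteq> {..<m}.
        is_affine Z (I - {m - 1}) (socle (m - 1) A) \<mu> \<and>
        is_affine Z (I - {m - 1}) (socle (m - 1) A) \<nu> \<and>
        lcont (socle (m - 1) A) \<mu> \<and> lcont (socle (m - 1) A) \<nu> \<and>
        (\<forall>x\<in>socle (m - 1) A. Fin 0 \<le> \<mu> x \<and> Fin 0 \<le> \<nu> x) \<and>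
        \<rho> < N (m - 1) \<and>
        A = {a \<in> FI Z I. trunc (m - 1) a \<in> socle (m - 1) A \<and>
               \<mu> (trunc (m - 1) a) \<le> a (m - 1) \<and> a (m - 1) \<le> \<nu> (trunc (m - 1) a) \<and>
               congr Z e (a (m - 1)) \<rho> (N (m - 1))})"

fun lc_precell :: "'a::linordered_ab_group_add set \<Rightarrow> 'a \<Rightarrow> nat \<Rightarrow> (nat \<Rightarrow> nat)
    \<Rightarrow> (nat \<Rightarrow> 'a omega) set \<Rightarrow> bool" where
  "lc_precell Z e 0 N A = (A = {\<lambda>_. PInf})"
| "lc_precell Z e (Suc k) N A =
     (lc_precell Z e k N (socle k A) \<and> (\<exists>\<mu> \<nu> \<rho>. lc_pres Z e (Suc k) N A \<mu> \<nu> \<rho>))"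

end

theory Submission
  imports Defs
begin

text \<open>Since Z has a least positive element, the socle X is discrete, so the only
continuity to check for fhat is its divergence at the points of closure X - X. Over
each x in X the fibre of A is an arithmetic progression of difference N_m between
mu(x) and nu(x); f is monotone along it and smallest towards the end selected by the
sign of alpha_m. That endpoint is finite, for otherwise f would decrease towards the
point x of closure A - A, where it tends to +\<infinity>. Some fibre point lies within N_m of
the endpoint. This gives both bounds on fhat and, near a point of closure X - X,
reduces the divergence of fhat to that of f: either the endpoint tends to +\<infinity>, or the
chosen fibre points range over finitely many values.
The minimum of f exists by induction on m: fhat satisfies the same hypotheses on X,
and the values of f between min fhat and min fhat + |alpha_m| N_m form a finite set,
because a common denominator of the alpha_i maps them to a bounded subset of Z.\<close>

section \<open>Integer multiples in abelian groups\<close>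

lemma nmul_0[simp]: "nmul 0 x = 0" by (simp add: nmul_def)
lemma nmul_Suc: "nmul (Suc n) x = x + nmul n x" by (simp add: nmul_def add.commute)
lemma nmul_1[simp]: "nmul (Suc 0) x = x" by (simp add: nmul_Suc)
lemma nmul_add_left: "nmul (m + n) x = nmul m x + nmul n x"
  by (induction m) (simp_all add: nmul_Suc add.assoc)
lemma nmul_add_right: "nmul n (x + y) = nmul n x + nmul n y"
  by (simp add: nmul_def sum.distrib)
lemma nmul_minus: "nmul n (- x) = - nmul n x"
  by (simp add: nmul_def sum_negf)
lemma nmul_diff: "nmul n (x - y) = nmul n x - nmul n y"
  using nmul_add_right[of n x "-y"] by (simp add: nmul_minus)
lemma nmul_zero[simp]: "nmul n 0 = 0" by (simp add: nmul_def)
lemma nmul_mult: "nmul (m * n) x = nmul m (nmul n x)"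
  by (induction m) (simp_all add: nmul_Suc nmul_add_left nmul_add_right)
lemma nmul_commute: "nmul m (nmul n x) = nmul n (nmul m x)"
  by (metis mult.commute nmul_mult)

lemma nmul_mono: "(x::'a::linordered_ab_group_add) \<le> y \<Longrightarrow> nmul n x \<le> nmul n y"
  by (simp add: nmul_def sum_mono)
lemma nmul_strict_mono: "(x::'a::linordered_ab_group_add) < y \<Longrightarrow> 0 < n \<Longrightarrow> nmul n x < nmul n y"
proof (induction n)
  case (Suc n)
  then show ?case
    by (cases "n = 0") (simp_all add: nmul_Suc add_strict_mono)
qed simp
lemma nmul_less_iff: "0 < n \<Longrightarrow> nmul n (x::'a::linordered_ab_group_add) < nmul n y \<longleftrightarrow> x < y"
  by (metis nmul_mono nmul_strict_mono not_le)
lemma nmul_le_iff: "0 < n \<Longrightarrow> nmul n (x::'a::linordered_ab_group_add) \<le> nmul n y \<longleftrightarrow> x \<le> y"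
  by (metis nmul_mono nmul_strict_mono not_le)
lemma nmul_eq_iff: "0 < n \<Longrightarrow> nmul n (x::'a::linordered_ab_group_add) = nmul n y \<longleftrightarrow> x = y"
  by (metis nmul_le_iff order.antisym order.refl)
lemma nmul_pos: "0 < (x::'a::linordered_ab_group_add) \<Longrightarrow> 0 < n \<Longrightarrow> 0 < nmul n x"
  using nmul_strict_mono[of 0 x n] by simp
lemma nmul_strict_mono_left: "0 < (x::'a::linordered_ab_group_add) \<Longrightarrow> m < n \<Longrightarrow> nmul m x < nmul n x"
  using nmul_add_left[of m "n - m" x] nmul_pos[of x "n - m"] by simp

lemma zmul_of_nat[simp]: "zmul (int n) x = nmul n x" by (simp add: zmul_def)
lemma zmul_zero_left[simp]: "zmul 0 x = 0" by (simp add: zmul_def)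
lemma zmul_one[simp]: "zmul 1 x = x" by (simp add: zmul_def)
lemma zmul_minus_left: "zmul (- k) x = - zmul k x"
  by (cases "k = 0") (auto simp add: zmul_def)
lemma zmul_minus_right: "zmul k (- x) = - zmul k x"
  by (simp add: zmul_def nmul_minus)
lemma zmul_eq_nmul_diff: "zmul k x = nmul (nat k) x - nmul (nat (- k)) x"
  by (simp add: zmul_def)

lemma zmul_add_left: "zmul (k + l) x = zmul k x + zmul l x"
proof -
  have "nat k + nat l + nat (-(k+l)) = nat (k+l) + (nat (-k) + nat (-l))"
    by linarith
  then have "nmul (nat k + nat l) x + nmul (nat (-(k+l))) x
      = nmul (nat (k+l)) x + nmul (nat (-k) + nat (-l)) x"
    by (metis nmul_add_left)
  then show ?thesis
    by (simp add: zmul_eq_nmul_diff nmul_add_left algebra_simps)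
qed
lemma zmul_add_right: "zmul k (x + y) = zmul k x + zmul k y"
  by (simp add: zmul_def nmul_add_right)

lemma zmul_mult: "zmul (k * l) x = zmul k (zmul l x)"
proof -
  have nonneg: "zmul (int a * int b) x = zmul (int a) (zmul (int b) x)" for a b
    by (metis of_nat_mult zmul_of_nat nmul_mult)
  obtain a b where "k = int a \<or> k = - int a" "l = int b \<or> l = - int b"
    by (metis int_cases2)
  then show ?thesis
    using nonneg[of a b]
    by (elim disjE) (simp_all only: mult_minus_left mult_minus_right zmul_minus_left
        zmul_minus_right minus_minus)
qed
lemma nmul_zmul: "nmul n (zmul k x) = zmul (int n * k) x"
  by (simp add: zmul_mult)
lemma zmul_mono: "0 \<le> k \<Longrightarrow> (x::'a::linordered_ab_group_add) \<le> y \<Longrightarrow> zmul k x \<le> zmul k y"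
  by (simp add: zmul_def nmul_mono)

lemma rat_eq_int_div_nat: "\<exists>p n. 0 < n \<and> (r::rat) = of_int p / of_nat n"
proof -
  obtain p d where q: "quotient_of r = (p, d)" by (cases "quotient_of r")
  then have "d > 0" "r = of_int p / of_int d"
    by (simp_all add: quotient_of_denom_pos quotient_of_div)
  then show ?thesis by (intro exI[of _ p] exI[of _ "nat d"]) simp
qed

lemma common_denominator:
  fixes \<alpha> :: "nat \<Rightarrow> rat"
  shows "\<exists>D::int. D > 0 \<and> (\<forall>i<m. of_int D * \<alpha> i \<in> \<int>)"
proof -
  define d where "d i = snd (quotient_of (\<alpha> i))" for i
  define p where "p i = fst (quotient_of (\<alpha> i))" for i
  have q: "quotient_of (\<alpha> i) = (p i, d i)" for i by (simp add: p_def d_def)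
  have dpos: "d i > 0" for i using quotient_of_denom_pos[OF q] .
  have \<alpha>: "\<alpha> i = of_int (p i) / of_int (d i)" for i using quotient_of_div[OF q] .
  define D where "D = prod d {..<m}"
  have "of_int D * \<alpha> i = of_int (prod d ({..<m} - {i}) * p i)" if "i < m" for i
    using that \<alpha>[of i] dpos[of i] by (simp add: D_def prod.remove field_simps)
  moreover have "D > 0" unfolding D_def using dpos by (simp add: prod_pos)
  ultimately show ?thesis by (metis Ints_of_int)
qed

section \<open>Z-groups and rational multiples\<close>

locale zgroup =
  fixes Z :: "'a::linordered_ab_group_add set" and e :: 'a
  assumes hull: "zgroup_hull Z e"
begin

lemma Z_zero: "0 \<in> Z"
  and Z_add: "x \<in> Z \<Longrightarrow> y \<in> Z \<Longrightarrow> x + y \<in> Z"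
  and Z_uminus: "x \<in> Z \<Longrightarrow> - x \<in> Z"
  and e_in_Z: "e \<in> Z"
  and e_pos: "0 < e"
  and e_least: "z \<in> Z \<Longrightarrow> 0 < z \<Longrightarrow> e \<le> z"
  and card_Z_mod: "n \<ge> 1 \<Longrightarrow> card ((\<lambda>z. {w\<in>Z. z - w \<in> nmul n ` Z}) ` Z) = n"
  and divisible: "n \<ge> 1 \<Longrightarrow> \<exists>y. nmul n y = x"
  and multiple_in_Z: "\<exists>n::nat. n \<ge> 1 \<and> nmul n x \<in> Z"
  using hull unfolding zgroup_hull_def by blast+

lemma Z_diff: "x \<in> Z \<Longrightarrow> y \<in> Z \<Longrightarrow> x - y \<in> Z"
  using Z_add[of x "-y"] Z_uminus[of y] by simp
lemma Z_nmul: "x \<in> Z \<Longrightarrow> nmul n x \<in> Z"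
  by (induction n) (simp_all add: nmul_Suc Z_zero Z_add)
lemma Z_zmul: "x \<in> Z \<Longrightarrow> zmul k x \<in> Z"
  by (simp add: zmul_def Z_nmul Z_uminus)
lemma Z_sum: "(\<And>i. i \<in> S \<Longrightarrow> g i \<in> Z) \<Longrightarrow> sum g S \<in> Z"
  by (induction S rule: infinite_finite_induct) (simp_all add: Z_zero Z_add)

lemma Z_no_element_between: "x \<in> Z \<Longrightarrow> 0 < x \<Longrightarrow> x < e \<Longrightarrow> False"
  using e_least by (simp add: not_le[symmetric])

lemma Z_eq_if_close:
  assumes "x \<in> Z" "y \<in> Z" "y - e < x" "x < y + e"
  shows "x = y"
proof (rule ccontr)
  assume "x \<noteq> y"
  then consider "x < y" | "y < x" by fastforce
  then show False
  proof cases
    case 1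
    then show False
      using Z_no_element_between[OF Z_diff[OF assms(2,1)]] assms(3) by (simp add: algebra_simps)
  next
    case 2
    then show False
      using Z_no_element_between[OF Z_diff[OF assms(1,2)]] assms(4) by (simp add: algebra_simps)
  qed
qed

lemma Z_div_mod:
  assumes n: "n \<ge> 1" and z: "z \<in> Z"
  shows "\<exists>w\<in>Z. \<exists>j<n. z = nmul n w + nmul j e"
proof -
  define C where "C = (\<lambda>z. {w\<in>Z. z - w \<in> nmul n ` Z})"
  have finite_classes: "finite (C ` Z)" and card_classes: "card (C ` Z) = n"
    using card_Z_mod[OF n] n unfolding C_def by (auto intro: card_ge_0_finite)
  have self: "x \<in> C x" if "x \<in> Z" for x
    unfolding C_def using that Z_zero by (auto intro: image_eqI[of 0 _ 0])
  have distinct: "C (nmul i e) \<noteq> C (nmul j e)" if "i < j" "j < n" for i j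
  proof
    assume "C (nmul i e) = C (nmul j e)"
    then have "nmul i e \<in> C (nmul j e)" using self Z_nmul[OF e_in_Z] by metis
    then obtain w where w: "w \<in> Z" "nmul j e - nmul i e = nmul n w" unfolding C_def by auto
    have "nmul j e - nmul i e = nmul (j - i) e" using nmul_add_left[of i "j - i" e] that by simp
    then have "nmul n 0 < nmul n w" "nmul n w < nmul n e"
      using w nmul_pos[OF e_pos, of "j - i"] nmul_strict_mono_left[OF e_pos, of "j - i" n] that
      by auto
    then show False
      using Z_no_element_between[OF w(1)] nmul_less_iff[of n 0 w] nmul_less_iff[of n w e] n
      by auto
  qed
  have "inj_on (\<lambda>j. C (nmul j e)) {..<n}"
  proof (rule inj_onI, rule ccontr)
    fix i j assume "i \<in> {..<n}" "j \<in> {..<n}" "C (nmul i e) = C (nmul j e)" "i \<noteq> j"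
    then show False using distinct[of i j] distinct[of j i] by (cases "i < j") auto
  qed
  then have "card ((\<lambda>j. C (nmul j e)) ` {..<n}) = n" by (simp add: card_image)
  moreover have "(\<lambda>j. C (nmul j e)) ` {..<n} \<subseteq> C ` Z" using Z_nmul[OF e_in_Z] by auto
  ultimately have "(\<lambda>j. C (nmul j e)) ` {..<n} = C ` Z"
    using card_subset_eq[OF finite_classes] card_classes by simp
  then have "C z \<in> (\<lambda>j. C (nmul j e)) ` {..<n}" using z by blast
  then obtain j where j: "j < n" "C z = C (nmul j e)" by auto
  then obtain w where w: "w \<in> Z" "nmul j e - z = nmul n w"
    using self[OF z] unfolding C_def by auto
  then have "z = nmul n (- w) + nmul j e" by (simp add: nmul_minus algebra_simps)
  then show ?thesis using j Z_uminus[OF w(1)] by blast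
qed

lemma Z_ceiling: "\<exists>w\<in>Z. u \<le> w \<and> w < u + e"
proof -
  obtain k where k: "k \<ge> 1" "nmul k u \<in> Z" using multiple_in_Z by blast
  obtain w j where w: "w \<in> Z" "j < k" "nmul k u = nmul k w + nmul j e"
    using Z_div_mod[OF k] by blast
  have kpos: "0 < k" using k by simp
  show ?thesis
  proof (cases "j = 0")
    case True
    then have "u = w" using w nmul_eq_iff[OF kpos, of u w] by simp
    then show ?thesis using w(1) e_pos by auto
  next
    case False
    have "nmul k u < nmul k (w + e)"
      using w nmul_strict_mono_left[OF e_pos w(2)] by (simp add: nmul_add_right)
    moreover have "nmul k (w + e) < nmul k (u + e)"
      using w nmul_pos[OF e_pos, of j] False by (simp add: nmul_add_right)
    ultimately show ?thesis
      using nmul_less_iff[OF kpos] Z_add[OF w(1) e_in_Z] by (meson less_imp_le)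
  qed
qed

lemma congruent_in_window_above:
  assumes n: "n \<ge> 1" and r: "r \<in> Z"
  shows "\<exists>y\<in>Z. y - r \<in> nmul n ` Z \<and> q \<le> y \<and> y < q + nmul n e"
proof -
  obtain u where u: "nmul n u = q - r" using divisible[OF n] by blast
  obtain w where w: "w \<in> Z" "u \<le> w" "w < u + e" using Z_ceiling by blast
  have "nmul n w < nmul n (u + e)" using nmul_strict_mono[OF w(3)] n by simp
  then show ?thesis
    using Z_add[OF r Z_nmul[OF w(1)]] w nmul_mono[OF w(2), of n] u
    by (intro bexI[of _ "r + nmul n w"]) (auto simp: nmul_add_right algebra_simps)
qed

lemma congruent_in_window_below:
  assumes n: "n \<ge> 1" and r: "r \<in> Z"
  shows "\<exists>y\<in>Z. y - r \<in> nmul n ` Z \<and> q - nmul n e < y \<and> y \<le> q"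
proof -
  obtain y where y: "y \<in> Z" "y + r \<in> nmul n ` Z" "- q \<le> y" "y < - q + nmul n e"
    using congruent_in_window_above[OF n Z_uminus[OF r], of "-q"] by auto
  have "- y - r = nmul n (- w)" if "y + r = nmul n w" for w
    using that by (metis minus_add_distrib nmul_minus diff_conv_add_uminus)
  then have "- y - r \<in> nmul n ` Z" using y(2) Z_uminus by blast
  moreover have "q - nmul n e < - y" "- y \<le> q"
    using y(3,4) by (simp_all add: algebra_simps minus_le_iff)
  ultimately show ?thesis using Z_uminus[OF y(1)] by blast
qed

lemma congruent_gap:
  assumes n: "n \<ge> 1" and y: "y - r \<in> nmul n ` Z" and y': "y' - r \<in> nmul n ` Z"
    and less: "y' < y" "y < y' + nmul n e"
  shows False
proof -
  obtain w w' where w: "w \<in> Z" "w' \<in> Z" "y - r = nmul n w" "y' - r = nmul n w'"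
    using y y' by blast
  then have "y - y' = nmul n (w - w')" by (simp add: nmul_diff algebra_simps)
  then have "nmul n 0 < nmul n (w - w')" "nmul n (w - w') < nmul n e"
    using less by (simp_all add: algebra_simps)
  then have "0 < w - w'" "w - w' < e"
    using nmul_less_iff[of n 0 "w - w'"] nmul_less_iff[of n "w - w'" e] n by auto
  then show False
    using Z_no_element_between[OF Z_diff[OF w(1,2)]] by simp
qed

lemma finite_Z_atLeastAtMost: "finite (Z \<inter> {c .. c + nmul K e})"
proof (induction K)
  case 0
  then show ?case by (simp add: Int_insert_right)
next
  case (Suc K)
  define S where "S = Z \<inter> {c + nmul K e <.. c + nmul (Suc K) e}"
  have "S \<subseteq> {y}" if "y \<in> S" for y
  proof
    fix x assume "x \<in> S"
    have less_shift: "u < v + e" if "c + nmul K e < v" "u \<le> c + nmul (Suc K) e" for u v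
    proof -
      have "c + nmul (Suc K) e < v + e"
        using add_strict_right_mono[OF that(1), of e] by (simp add: nmul_Suc algebra_simps)
      then show ?thesis by (rule le_less_trans[OF that(2)])
    qed
    have "y < x + e" "x < y + e"
      using \<open>x \<in> S\<close> that less_shift unfolding S_def by auto
    then show "x \<in> {y}"
      using Z_eq_if_close[of x y] \<open>x \<in> S\<close> that unfolding S_def by (simp add: algebra_simps)
  qed
  then have "finite S"
    by (metis ex_in_conv finite.emptyI finite_insert finite_subset)
  moreover have "Z \<inter> {c .. c + nmul (Suc K) e} \<subseteq> (Z \<inter> {c .. c + nmul K e}) \<union> S"
    unfolding S_def by auto
  ultimately show ?case using Suc finite_subset by blast
qed

lemma rsc_eqI:
  fixes x y :: 'a
  assumes n: "0 < n" and y: "nmul n y = zmul p x"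
  shows "rsc (of_int p / of_nat n) x = y"
proof -
  define r where "r = (of_int p / of_nat n :: rat)"
  obtain p' d where q: "quotient_of r = (p', d)" by (cases "quotient_of r")
  then have d: "d > 0" and r: "r = of_int p' / of_int d"
    by (simp_all add: quotient_of_denom_pos quotient_of_div)
  have cross: "p * d = p' * int n"
  proof -
    have "(of_int p / of_nat n :: rat) = of_int p' / of_int d" using r r_def by simp
    then have "(of_int p * of_int d :: rat) = of_int p' * of_nat n" using n d
      by (simp add: field_simps)
    then show ?thesis by (metis of_int_eq_iff of_int_mult of_int_of_nat_eq)
  qed
  have y_d: "nmul (nat d) y = zmul p' x"
  proof -
    have "nmul n (nmul (nat d) y) = nmul (nat d) (nmul n y)" by (rule nmul_commute)
    also have "\<dots> = zmul (d * p) x" using y d by (simp add: nmul_zmul)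
    also have "\<dots> = zmul (int n * p') x" using cross by (simp add: mult.commute)
    also have "\<dots> = nmul n (zmul p' x)" by (simp add: nmul_zmul)
    finally show ?thesis using n nmul_eq_iff by blast
  qed
  have "(THE y. nmul (nat (snd (quotient_of r))) y = zmul (fst (quotient_of r)) x) = y"
  proof (rule the_equality)
    show "nmul (nat (snd (quotient_of r))) y = zmul (fst (quotient_of r)) x" using y_d q by simp
    fix z assume "nmul (nat (snd (quotient_of r))) z = zmul (fst (quotient_of r)) x"
    then have "nmul (nat d) z = nmul (nat d) y" using y_d q by simp
    then show "z = y" using nmul_eq_iff[of "nat d" z y] d by simp
  qed
  then show ?thesis by (simp add: rsc_def r_def)
qed

lemma nmul_rsc:
  fixes x :: 'a
  shows "0 < n \<Longrightarrow> r = of_int p / of_nat n \<Longrightarrow> nmul n (rsc r x) = zmul p x"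
proof -
  assume n: "0 < n" and r: "r = of_int p / of_nat n"
  obtain y where y: "nmul n y = zmul p x" using divisible[of n "zmul p x"] n by auto
  then have "rsc r x = y" using rsc_eqI[OF n y] r by simp
  with y show ?thesis by simp
qed

lemma rsc_add_left:
  fixes x :: 'a
  shows "rsc (r + s) x = rsc r x + rsc s x"
proof -
  obtain p n where r: "0 < n" "r = of_int p / of_nat n" using rat_eq_int_div_nat by blast
  obtain q k where s: "0 < k" "s = of_int q / of_nat k" using rat_eq_int_div_nat by blast
  have rs: "r + s = of_int (p * int k + q * int n) / of_nat (n * k)"
    using r s by (simp add: field_simps)
  have "nmul (n * k) (rsc r x) = zmul (int k * p) x"
    using nmul_rsc[OF r, of x] by (simp add: mult.commute[of n] nmul_mult nmul_zmul)
  moreover have "nmul (n * k) (rsc s x) = zmul (int n * q) x"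
    using nmul_rsc[OF s, of x] by (simp add: nmul_mult nmul_zmul)
  ultimately have "nmul (n * k) (rsc r x + rsc s x) = zmul (p * int k + q * int n) x"
    by (simp add: nmul_add_right zmul_add_left mult.commute)
  then show ?thesis unfolding rs by (intro rsc_eqI) (use r s in simp_all)
qed

lemma rsc_mult:
  fixes x :: 'a
  shows "rsc (r * s) x = rsc r (rsc s x)"
proof -
  obtain p n where r: "0 < n" "r = of_int p / of_nat n" using rat_eq_int_div_nat by blast
  obtain q k where s: "0 < k" "s = of_int q / of_nat k" using rat_eq_int_div_nat by blast
  have "nmul (n * k) (rsc r (rsc s x)) = nmul k (zmul p (rsc s x))"
    using nmul_rsc[OF r] by (simp add: mult.commute[of n] nmul_mult)
  also have "\<dots> = zmul p (nmul k (rsc s x))"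
    by (metis mult.commute nmul_zmul zmul_mult zmul_of_nat)
  also have "\<dots> = zmul (p * q) x" using nmul_rsc[OF s] by (simp add: zmul_mult)
  finally show ?thesis
    using rsc_eqI[of "n * k" "rsc r (rsc s x)" "p * q" x] r s by simp
qed

lemma rsc_add_right:
  fixes x y :: 'a
  shows "rsc r (x + y) = rsc r x + rsc r y"
proof -
  obtain p n where r: "0 < n" "r = of_int p / of_nat n" using rat_eq_int_div_nat by blast
  have "nmul n (rsc r x + rsc r y) = zmul p (x + y)"
    using nmul_rsc[OF r] by (simp add: nmul_add_right zmul_add_right)
  then show ?thesis using rsc_eqI r by simp
qed

lemma rsc_of_int:
  fixes x :: 'a
  shows "rsc (of_int p) x = zmul p x"
  using rsc_eqI[of 1 "zmul p x" p x] by simp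
lemma rsc_of_nat:
  fixes x :: 'a
  shows "rsc (of_nat n) x = nmul n x"
  using rsc_of_int[of "int n" x] by simp
lemma rsc_zero_left[simp]: "rsc 0 (x::'a) = 0"
  using rsc_of_int[of 0 x] by simp
lemma rsc_one[simp]: "rsc 1 (x::'a) = x"
  using rsc_of_int[of 1 x] by simp
lemma rsc_zero_right[simp]: "rsc r (0::'a) = 0"
  using rsc_add_right[of r 0 0] by simp
lemma rsc_minus_right:
  fixes x :: 'a
  shows "rsc r (- x) = - rsc r x"
  using minus_unique[of "rsc r x" "rsc r (- x)"] rsc_add_right[of r x "-x"] by simp
lemma rsc_diff_right:
  fixes x y :: 'a
  shows "rsc r (x - y) = rsc r x - rsc r y"
  using rsc_add_right[of r x "-y"] by (simp add: rsc_minus_right)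
lemma rsc_minus_left:
  fixes x :: 'a
  shows "rsc (- r) x = - rsc r x"
  using minus_unique[of "rsc r x" "rsc (- r) x"] rsc_add_left[of r "-r" x] by simp
lemma rsc_diff_left:
  fixes x :: 'a
  shows "rsc (r - s) x = rsc r x - rsc s x"
  using rsc_add_left[of r "-s" x] by (simp add: rsc_minus_left)
lemma rsc_sum_right: "rsc r (sum g S :: 'a) = (\<Sum>i\<in>S. rsc r (g i))"
  by (induction S rule: infinite_finite_induct) (simp_all add: rsc_add_right)

lemma rsc_left_mono:
  fixes x y :: 'a
  shows "0 \<le> r \<Longrightarrow> x \<le> y \<Longrightarrow> rsc r x \<le> rsc r y"
proof -
  assume "0 \<le> r" "x \<le> y"
  obtain p n where r: "0 < n" "r = of_int p / of_nat n" using rat_eq_int_div_nat by blast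
  with \<open>0 \<le> r\<close> have "0 \<le> p" by (simp add: zero_le_divide_iff)
  then have "zmul p x \<le> zmul p y" using zmul_mono \<open>x \<le> y\<close> by blast
  then show ?thesis using nmul_rsc[OF r] nmul_le_iff[OF r(1)] by metis
qed
lemma rsc_left_mono_neg:
  fixes x y :: 'a
  shows "r \<le> 0 \<Longrightarrow> x \<le> y \<Longrightarrow> rsc r y \<le> rsc r x"
  using rsc_left_mono[of "-r" x y] by (simp add: rsc_minus_left)
lemma rsc_right_mono:
  fixes x :: 'a
  shows "0 \<le> x \<Longrightarrow> r \<le> s \<Longrightarrow> rsc r x \<le> rsc s x"
  using rsc_left_mono[of "s - r" 0 x] by (simp add: rsc_diff_left)

lemma rsc_inverse_cancel:
  fixes x :: 'a
  shows "r \<noteq> 0 \<Longrightarrow> rsc (inverse r) (rsc r x) = x"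
  by (simp add: rsc_mult[symmetric])
lemma rsc_Ints_in_Z: "r \<in> \<int> \<Longrightarrow> x \<in> Z \<Longrightarrow> rsc r x \<in> Z"
  by (metis Ints_cases rsc_of_int Z_zmul)

lemma rsc_affine_value_in_Z:
  assumes a: "a \<in> FI Z {..<m}" and D: "\<forall>i<m. of_int D * \<alpha> i \<in> \<int>"
  shows "rsc (of_int D) (\<Sum>i<m. rsc (\<alpha> i) (the_fin (a i))) \<in> Z"
proof -
  have "the_fin (a i) \<in> Z" if "i < m" for i
    using a that unfolding FI_def by force
  then have "rsc (of_int D * \<alpha> i) (the_fin (a i)) \<in> Z" if "i < m" for i
    using D that rsc_Ints_in_Z by blast
  then have "(\<Sum>i<m. rsc (of_int D * \<alpha> i) (the_fin (a i))) \<in> Z" by (intro Z_sum) simp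
  then show ?thesis by (simp add: rsc_sum_right flip: rsc_mult)
qed

text \<open>Multiplying by a common denominator \<open>D\<close> of the \<open>\<alpha> i\<close> maps the values of the affine
map injectively and monotonically into \<open>Z\<close>, and an interval of length \<open>rsc r e\<close> into
one of length \<open>nmul \<lceil>D r\<rceil> e\<close>; for lack of an Archimedean property the interval length
must be a rational multiple of \<open>e\<close>.\<close>

lemma finite_affine_values_in_interval:
  assumes S: "S \<subseteq> FI Z {..<m}" and r: "0 \<le> r"
  shows "finite {v. \<exists>a\<in>S. v = \<beta> + (\<Sum>i<m. rsc (\<alpha> i) (the_fin (a i))) \<and> lo \<le> v \<and> v \<le> lo + rsc r e}"
    (is "finite ?V")
proof -
  obtain D :: int where D: "D > 0" "\<forall>i<m. of_int D * \<alpha> i \<in> \<int>"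
    using common_denominator by blast
  define \<phi> where "\<phi> v = rsc (of_int D) (v - \<beta>)" for v
  define K where "K = nat \<lceil>of_int D * r\<rceil>"
  have \<phi>_mono: "\<phi> v \<le> \<phi> w" if "v \<le> w" for v w
    unfolding \<phi>_def using that D(1) by (intro rsc_left_mono) simp_all
  have \<phi>_top: "\<phi> (lo + rsc r e) \<le> \<phi> lo + nmul K e"
  proof -
    have "\<phi> (lo + rsc r e) = \<phi> lo + rsc (of_int D * r) e"
      unfolding \<phi>_def rsc_mult by (simp add: rsc_add_right[symmetric] algebra_simps)
    also have "rsc (of_int D * r) e \<le> rsc (of_nat K) e"
      unfolding K_def using e_pos r D(1) by (intro rsc_right_mono) (simp_all add: of_nat_ceiling)
    finally show ?thesis by (simp add: rsc_of_nat)
  qed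
  have "?V \<subseteq> (\<lambda>z. \<beta> + rsc (inverse (of_int D)) z) ` (Z \<inter> {\<phi> lo .. \<phi> lo + nmul K e})"
  proof
    fix v assume "v \<in> ?V"
    then obtain a where a: "a \<in> S" "v = \<beta> + (\<Sum>i<m. rsc (\<alpha> i) (the_fin (a i)))"
      and v: "lo \<le> v" "v \<le> lo + rsc r e" by blast
    have "v = \<beta> + rsc (inverse (of_int D)) (\<phi> v)"
      unfolding \<phi>_def using D(1) rsc_inverse_cancel[of "of_int D" "v - \<beta>"] by simp
    moreover have "\<phi> v \<in> Z \<inter> {\<phi> lo .. \<phi> lo + nmul K e}"
      using rsc_affine_value_in_Z[OF subsetD[OF S a(1)] D(2)] a(2) \<phi>_mono[OF v(1)]
        order_trans[OF \<phi>_mono[OF v(2)] \<phi>_top]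
      unfolding \<phi>_def by simp
    ultimately show "v \<in> (\<lambda>z. \<beta> + rsc (inverse (of_int D)) z) ` (Z \<inter> {\<phi> lo .. \<phi> lo + nmul K e})"
      by blast
  qed
  then show ?thesis using finite_subset finite_Z_atLeastAtMost by blast
qed

end

section \<open>The extended value set and its product topology\<close>

lemma Fin_le_Fin: "(Fin a \<le> Fin b) = (a \<le> (b::'a::linorder))"
  by simp
lemma Fin_less_Fin[simp]: "(Fin a < Fin b) = (a < (b::'a::linorder))"
  by (simp add: less_omega_def less_le_not_le)
lemma Fin_less_PInf[simp]: "Fin a < (PInf::'a::linorder omega)"
  by (simp add: less_omega_def)
lemma not_PInf_less[simp]: "\<not> (PInf < (x::'a::linorder omega))"
  by (simp add: less_omega_def)
lemma Fin_the_fin: "x \<noteq> PInf \<Longrightarrow> Fin (the_fin x) = x"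
  by (cases x) auto

lemma tendsto_PInf_iff:
  "((g::'x \<Rightarrow> 'a::linorder omega) \<longlongrightarrow> PInf) F \<longleftrightarrow> (\<forall>l. eventually (\<lambda>x. Fin l < g x) F)"
proof
  assume "(g \<longlongrightarrow> PInf) F"
  then show "\<forall>l. eventually (\<lambda>x. Fin l < g x) F" unfolding order_tendsto_iff by simp
next
  assume "\<forall>l. eventually (\<lambda>x. Fin l < g x) F"
  moreover have "l < PInf \<Longrightarrow> \<exists>v. l = Fin v" for l :: "'a omega" by (cases l) auto
  ultimately show "(g \<longlongrightarrow> PInf) F" unfolding order_tendsto_iff by auto
qed

lemma open_Collect_coordinate: "open V \<Longrightarrow> open {z::'i \<Rightarrow> 'b::topological_space. z i \<in> V}"
  using product_topology_basis'[of "{i}" "\<lambda>_. V" id] by simp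

lemma open_Collect_finite_box:
  "finite I \<Longrightarrow> (\<And>i. i \<in> I \<Longrightarrow> open (U i)) \<Longrightarrow>
    open {z::'i \<Rightarrow> 'b::topological_space. \<forall>i\<in>I. z i \<in> U i}"
  using product_topology_basis'[of I U id] by simp

lemma closed_Collect_coordinate_eq: "closed {z::'i \<Rightarrow> 'b::t1_space. z i = c}"
proof -
  have "open {z::'i \<Rightarrow> 'b. z i \<in> - {c}}" by (rule open_Collect_coordinate) auto
  moreover have "- {z::'i \<Rightarrow> 'b. z i = c} = {z. z i \<in> - {c}}" by auto
  ultimately show ?thesis unfolding closed_def by simp
qed

lemma closed_singleton_fun: "closed {p::'i \<Rightarrow> 'b::t1_space}"
proof -
  have "{p} = (\<Inter>i. {z::'i \<Rightarrow> 'b. z i = p i})" by auto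
  then show ?thesis by (simp add: closed_INT closed_Collect_coordinate_eq)
qed

lemma tendsto_continuous_on_UNIV:
  "continuous_on UNIV g \<Longrightarrow> (g \<longlongrightarrow> g p) (at p within S)"
  unfolding continuous_on_def by (rule tendsto_within_subset) auto

lemma tendsto_coordinate: "((\<lambda>z::'i \<Rightarrow> 'b::topological_space. z i) \<longlongrightarrow> p i) (at p within S)"
  by (rule tendsto_continuous_on_UNIV) simp

lemma tendsto_coordinatewise:
  fixes g :: "'x \<Rightarrow> 'i \<Rightarrow> 'b::topological_space"
  assumes "\<And>i. ((\<lambda>x. g x i) \<longlongrightarrow> l i) F"
  shows "(g \<longlongrightarrow> l) F"
proof -
  have "limitin (product_topology (\<lambda>i. euclidean) UNIV) g l F"
    using assms by (simp add: limitin_componentwise limitin_canonical_iff)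
  then show ?thesis by (simp add: euclidean_product_topology limitin_canonical_iff)
qed

lemma continuous_on_fun_upd_const:
  "continuous_on UNIV (\<lambda>z::'i \<Rightarrow> 'b::topological_space. z(j := c))"
proof (rule continuous_on_coordinatewise_then_product)
  show "continuous_on UNIV (\<lambda>z. (z(j := c)) i)" for i by (cases "i = j") simp_all
qed

lemma continuous_on_fun_upd_value:
  "continuous_on UNIV (\<lambda>w. (q::'i \<Rightarrow> 'b::topological_space)(j := w))"
proof (rule continuous_on_coordinatewise_then_product)
  show "continuous_on UNIV (\<lambda>w. (q(j := w)) i)" for i by (cases "i = j") simp_all
qed

lemma fun_upd_Fin_in_open:
  fixes q :: "'i \<Rightarrow> 'a::linorder omega"
  assumes "open U" "q(j := PInf) \<in> U"
  shows "\<exists>b. \<forall>y. b < y \<longrightarrow> q(j := Fin y) \<in> U"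
proof -
  have "open ((\<lambda>w. q(j := w)) -` U)"
    by (rule open_vimage[OF assms(1) continuous_on_fun_upd_value])
  then obtain b where b: "b < PInf" "{b<..PInf} \<subseteq> (\<lambda>w. q(j := w)) -` U"
    using open_left[of _ PInf "Fin undefined"] assms(2) by fastforce
  then obtain v where "b = Fin v" by (cases b) auto
  then have "q(j := Fin y) \<in> U" if "v < y" for y
    using subsetD[OF b(2), of "Fin y"] that by simp
  then show ?thesis by blast
qed

lemma tendsto_fun_upd_const:
  "((\<lambda>z::'i \<Rightarrow> 'b::topological_space. z(j := c)) \<longlongrightarrow> p(j := c)) (at p within S)"
  using tendsto_continuous_on_UNIV[OF continuous_on_fun_upd_const] .

lemma tendsto_continuous_extension:
  assumes "continuous_on (closure Y) h" "\<forall>y\<in>Y. h y = g y" "q \<in> closure Y"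
  shows "(g \<longlongrightarrow> h q) (at q within Y)"
proof -
  have "(h \<longlongrightarrow> h q) (at q within Y)"
    using assms(1,3) closure_subset unfolding continuous_on_def by (blast intro: tendsto_within_subset)
  moreover have "eventually (\<lambda>y. h y = g y) (at q within Y)"
    using assms(2) by (simp add: eventually_at_filter)
  ultimately show ?thesis using tendsto_cong by force
qed

lemma eventually_at_within_in: "eventually (\<lambda>x. x \<in> S) (at p within S)"
  by (simp add: eventually_at_filter)

lemma tendsto_at_pfrontier_if_extension_eq:
  assumes "lcont Y g" and "\<forall>h. continuous_on (closure Y) h \<and> (\<forall>y\<in>Y. h y = g y)
      \<longrightarrow> (\<forall>p\<in>pfrontier Y. h p = c)"
    and "p \<in> closure Y - Y"
  shows "(g \<longlongrightarrow> c) (at p within Y)"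
proof -
  obtain h where h: "continuous_on (closure Y) h" "\<forall>y\<in>Y. h y = g y"
    using assms(1) unfolding lcont_def by blast
  have "p \<in> pfrontier Y" using assms(3) closure_subset unfolding pfrontier_def by blast
  then have "h p = c" using assms(2) h by blast
  then show ?thesis using tendsto_continuous_extension[OF h] assms(3) by force
qed

lemma lcont_if_isolated_and_tendsto:
  fixes g :: "('i \<Rightarrow> 'b::t1_space) \<Rightarrow> 'c::topological_space"
  assumes isolated: "\<And>p. p \<in> Y \<Longrightarrow> \<exists>U. open U \<and> p \<in> U \<and> U \<inter> Y \<subseteq> {p}"
    and tendsto: "\<And>q. q \<in> closure Y \<Longrightarrow> q \<notin> Y \<Longrightarrow> (g \<longlongrightarrow> c) (at q within Y)"
  shows "lcont Y g"
proof -
  define h where "h y = (if y \<in> Y then g y else c)" for y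
  have "continuous_on (closure Y) h"
    unfolding continuous_on_topological
  proof (intro ballI allI impI)
    fix x B assume x: "x \<in> closure Y" and B: "open B" "h x \<in> B"
    show "\<exists>U. open U \<and> x \<in> U \<and> (\<forall>y\<in>closure Y. y \<in> U \<longrightarrow> h y \<in> B)"
    proof (cases "x \<in> Y")
      case True
      then obtain U where U: "open U" "x \<in> U" "U \<inter> Y \<subseteq> {x}" using isolated by blast
      have "U \<inter> closure Y \<subseteq> closure {x}"
        using open_Int_closure_subset[OF U(1), of Y] closure_mono[OF U(3)] by blast
      then have "U \<inter> closure Y \<subseteq> {x}" using closure_closed[OF closed_singleton_fun[of x]] by simp
      then show ?thesis using U B(2) by blast
    next
      case False
      then have c: "c \<in> B" using B(2) unfolding h_def by simp
      have "eventually (\<lambda>y. g y \<in> B) (at x within Y)"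
        using topological_tendstoD[OF tendsto[OF x False] B(1) c] .
      then obtain U where U: "open U" "x \<in> U" "\<forall>y\<in>U. y \<noteq> x \<longrightarrow> y \<in> Y \<longrightarrow> g y \<in> B"
        unfolding eventually_at_topological by blast
      have "h y \<in> B" if "y \<in> U" for y
      proof (cases "y \<in> Y")
        case True
        then have "y \<noteq> x" using False by blast
        then show ?thesis using U(3) that True unfolding h_def by simp
      qed (simp add: h_def c)
      then show ?thesis using U(1,2) by blast
    qed
  qed
  moreover have "\<forall>y\<in>Y. h y = g y" unfolding h_def by simp
  ultimately show ?thesis unfolding lcont_def by blast
qed

section \<open>A cell over its socle\<close>

text \<open>Coordinates are indexed from 0, so the last coordinate of a point of \<open>A\<close> has index
\<open>k = m - 1\<close>. The frontier hypothesis on \<open>f\<close> enters only through its consequence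
\<open>f_diverges\<close>.\<close>

locale cell = zgroup Z e for Z :: "'a::linordered_ab_group_add set" and e :: 'a +
  fixes m k :: nat and N :: "nat \<Rightarrow> nat" and A :: "(nat \<Rightarrow> 'a omega) set"
    and \<mu> \<nu> f :: "(nat \<Rightarrow> 'a omega) \<Rightarrow> 'a omega" and \<rho> :: nat
    and \<alpha> :: "nat \<Rightarrow> rat" and \<beta> :: 'a
  assumes m_eq: "m = Suc k" and N_pos: "0 < N k" and A_subset: "A \<subseteq> FI Z {..<m}"
    and pres: "lc_pres Z e m N A \<mu> \<nu> \<rho>"
    and f_eq: "\<forall>a\<in>A. f a = Fin (\<beta> + (\<Sum>i<m. rsc (\<alpha> i) (the_fin (a i))))"
    and f_diverges: "\<forall>p\<in>closure A - A. filterlim f (nhds PInf) (at p within A)"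
begin

abbreviation "X \<equiv> socle k A"
abbreviation "endpoint x \<equiv> if 0 \<le> \<alpha> k then \<mu> x else \<nu> x"
abbreviation "head x \<equiv> \<beta> + (\<Sum>i<k. rsc (\<alpha> i) (the_fin (x i)))"
abbreviation "fhat x \<equiv> Fin (head x + rsc (\<alpha> k) (the_fin (endpoint x)))"
abbreviation "step \<equiv> nmul (N k) e"
abbreviation "slack \<equiv> rsc (\<bar>\<alpha> k\<bar> * of_nat (N k)) e"

definition in_fibre :: "(nat \<Rightarrow> 'a omega) \<Rightarrow> 'a \<Rightarrow> bool" where
  "in_fibre x y \<longleftrightarrow> y \<in> Z \<and> \<mu> x \<le> Fin y \<and> Fin y \<le> \<nu> x \<and> y - nmul \<rho> e \<in> nmul (N k) ` Z"

lemma N_ge_1: "N k \<ge> 1"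
  using N_pos by simp

lemma step_pos: "0 < step"
  using nmul_pos[OF e_pos N_pos] .

lemma presentation:
  assumes "A \<noteq> {}"
  shows "is_affine Z {..<k} X \<mu>" "is_affine Z {..<k} X \<nu>" "lcont X \<mu>" "lcont X \<nu>"
    and "A = {a \<in> FI Z {..<m}. trunc k a \<in> X \<and> \<mu> (trunc k a) \<le> a k \<and>
                 a k \<le> \<nu> (trunc k a) \<and> congr Z e (a k) \<rho> (N k)}"
proof -
  obtain I where I: "I \<subseteq> {..<m}" "is_affine Z (I - {k}) X \<mu>" "is_affine Z (I - {k}) X \<nu>"
    "lcont X \<mu>" "lcont X \<nu>"
    "A = {a \<in> FI Z I. trunc k a \<in> X \<and> \<mu> (trunc k a) \<le> a k \<and> a k \<le> \<nu> (trunc k a) \<and>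
            congr Z e (a k) \<rho> (N k)}"
    using pres m_eq unfolding lc_pres_def by auto
  obtain b where b: "b \<in> A" using assms by blast
  have "i \<in> I" if "i < m" for i
  proof (rule ccontr)
    assume "i \<notin> I"
    then have "b i = PInf" using b I(6) unfolding FI_def by blast
    moreover have "b i \<in> Fin ` Z" using b A_subset that unfolding FI_def by blast
    ultimately show False by auto
  qed
  then have "I = {..<m}" using I(1) by auto
  moreover have "{..<m} - {k} = {..<k}" using m_eq by auto
  ultimately show "is_affine Z {..<k} X \<mu>" "is_affine Z {..<k} X \<nu>" "lcont X \<mu>" "lcont X \<nu>"
    "A = {a \<in> FI Z {..<m}. trunc k a \<in> X \<and> \<mu> (trunc k a) \<le> a k \<and>
           a k \<le> \<nu> (trunc k a) \<and> congr Z e (a k) \<rho> (N k)}"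
    using I by simp_all
qed

lemma X_subset_FI: "X \<subseteq> FI Z {..<k}"
  using A_subset m_eq unfolding socle_def trunc_def FI_def by auto

lemma X_coordinate_PInf: "x \<in> X \<Longrightarrow> k \<le> i \<Longrightarrow> x i = PInf"
  using X_subset_FI unfolding FI_def by auto

lemma X_coordinate_Fin: "x \<in> X \<Longrightarrow> i < k \<Longrightarrow> x i \<in> Fin ` Z"
  using X_subset_FI unfolding FI_def by auto

lemma trunc_fun_upd: "trunc k (x(k := c)) = trunc k x"
  by (simp add: trunc_def fun_eq_iff)

lemma trunc_X: "x \<in> X \<Longrightarrow> trunc k x = x"
  using X_coordinate_PInf[of x] by (auto simp: trunc_def fun_eq_iff)

lemma fun_upd_in_A_iff:
  assumes "x \<in> X" "y \<in> Z"
  shows "x(k := Fin y) \<in> A \<longleftrightarrow> in_fibre x y"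
proof -
  have "A \<noteq> {}" using assms(1) unfolding socle_def by blast
  moreover have "x(k := Fin y) \<in> FI Z {..<m}"
    using X_coordinate_Fin[OF assms(1)] X_coordinate_PInf[OF assms(1)] assms(2) m_eq
    unfolding FI_def by (auto simp: less_Suc_eq)
  ultimately have "x(k := Fin y) \<in> A \<longleftrightarrow> \<mu> x \<le> Fin y \<and> Fin y \<le> \<nu> x \<and> congr Z e (Fin y) \<rho> (N k)"
    using presentation(5) assms(1) trunc_X[OF assms(1)] trunc_fun_upd[of x "Fin y"]
    by (smt (verit, best) fun_upd_same mem_Collect_eq)
  then show ?thesis using assms(2) by (simp add: congr_def in_fibre_def)
qed

lemma A_fibre_decomp:
  assumes "a \<in> A"
  obtains y where "trunc k a \<in> X" "in_fibre (trunc k a) y" "a = (trunc k a)(k := Fin y)"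
proof -
  have "a \<in> FI Z {..<m}" using assms A_subset by blast
  then obtain y where y: "y \<in> Z" "a k = Fin y" and PInf: "\<And>i. m \<le> i \<Longrightarrow> a i = PInf"
    using m_eq unfolding FI_def by auto
  have "a = (trunc k a)(k := Fin y)"
    using y PInf m_eq by (auto simp: trunc_def fun_eq_iff not_less_eq)
  moreover have X: "trunc k a \<in> X" using assms unfolding socle_def by blast
  moreover have "in_fibre (trunc k a) y"
    using fun_upd_in_A_iff[OF X y(1)] assms calculation(1) by simp
  ultimately show ?thesis using that by blast
qed

lemma X_fibre_nonempty:
  assumes "x \<in> X"
  obtains y where "in_fibre x y" "x(k := Fin y) \<in> A"
proof -
  obtain a where a: "a \<in> A" "x = trunc k a" using assms unfolding socle_def by blast
  obtain y where "in_fibre x y" "a = x(k := Fin y)"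
    using A_fibre_decomp[OF a(1)] a(2) by blast
  then show ?thesis using that a(1) by blast
qed

lemma A_last_not_PInf: "a \<in> A \<Longrightarrow> a k \<noteq> PInf"
  by (erule A_fibre_decomp) (metis fun_upd_same omega.distinct(1))

lemma f_fun_upd:
  "x(k := Fin y) \<in> A \<Longrightarrow> f (x(k := Fin y)) = Fin (head x + rsc (\<alpha> k) y)"
proof -
  have "(\<Sum>i<m. rsc (\<alpha> i) (the_fin ((x(k := Fin y)) i)))
      = (\<Sum>i<k. rsc (\<alpha> i) (the_fin (x i))) + rsc (\<alpha> k) y"
    by (simp add: m_eq)
  then show "x(k := Fin y) \<in> A \<Longrightarrow> ?thesis" using f_eq by (simp add: add.assoc)
qed

lemma in_fibre_fun_upd_in_A: "x \<in> X \<Longrightarrow> in_fibre x y \<Longrightarrow> x(k := Fin y) \<in> A"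
  using fun_upd_in_A_iff in_fibre_def by blast

lemma fibre_unbounded_above:
  assumes x: "x \<in> X" and \<nu>: "\<nu> x = PInf" and ya: "in_fibre x ya"
  shows "\<exists>y. in_fibre x y \<and> b < y \<and> ya \<le> y"
proof -
  obtain y where y: "y \<in> Z" "y - nmul \<rho> e \<in> nmul (N k) ` Z" "max (b + e) ya \<le> y"
    using congruent_in_window_above[OF N_ge_1 Z_nmul[OF e_in_Z]] by blast
  have "b < y" using y(3) e_pos by (meson less_add_same_cancel1 less_le_trans max.boundedE)
  moreover have "\<mu> x \<le> Fin y" using ya y(3) unfolding in_fibre_def by (auto intro: order_trans)
  ultimately show ?thesis using y \<nu> unfolding in_fibre_def by auto
qed

lemma X_in_closure_A:
  assumes x: "x \<in> X" and \<nu>: "\<nu> x = PInf"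
  shows "x \<in> closure A"
  unfolding closure_iff_nhds_not_empty
proof (intro allI impI)
  fix B T assume T: "T \<subseteq> B" "open T" "x \<in> T"
  have "x(k := PInf) = x" using X_coordinate_PInf[OF x, of k] by auto
  then obtain b where b: "\<forall>y. b < y \<longrightarrow> x(k := Fin y) \<in> T"
    using fun_upd_Fin_in_open[OF T(2)] T(3) by metis
  obtain ya where "in_fibre x ya" using X_fibre_nonempty[OF x] by blast
  then obtain y where "in_fibre x y" "b < y" using fibre_unbounded_above[OF x \<nu>] by blast
  then have "x(k := Fin y) \<in> A \<inter> B" using b T(1) in_fibre_fun_upd_in_A[OF x] by blast
  then show "A \<inter> B \<noteq> {}" by blast
qed

text \<open>If \<open>\<alpha> k < 0\<close> and \<open>\<nu> x = +\<infinity>\<close>, then \<open>f\<close> is non-increasing along the unbounded fibre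
over \<open>x\<close>, so it cannot tend to \<open>+\<infinity>\<close> at the point \<open>x \<in> closure A - A\<close>.\<close>

lemma endpoint_finite:
  assumes x: "x \<in> X"
  shows "endpoint x \<noteq> PInf"
proof
  assume endpoint: "endpoint x = PInf"
  obtain ya where ya: "in_fibre x ya" "x(k := Fin ya) \<in> A" using X_fibre_nonempty[OF x] by blast
  have neg: "\<alpha> k < 0" and \<nu>: "\<nu> x = PInf"
    using endpoint ya(1) unfolding in_fibre_def by (auto split: if_splits)
  have "x \<notin> A" using A_last_not_PInf X_coordinate_PInf[OF x, of k] by blast
  then have "filterlim f (nhds PInf) (at x within A)"
    using f_diverges X_in_closure_A[OF x \<nu>] by blast
  then have "eventually (\<lambda>z. Fin (head x + rsc (\<alpha> k) ya) < f z) (at x within A)"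
    using tendsto_PInf_iff by blast
  then obtain T where T: "open T" "x \<in> T"
      "\<forall>z\<in>T. z \<noteq> x \<longrightarrow> z \<in> A \<longrightarrow> Fin (head x + rsc (\<alpha> k) ya) < f z"
    unfolding eventually_at_topological by blast
  have "x(k := PInf) = x" using X_coordinate_PInf[OF x, of k] by auto
  then obtain b where b: "\<forall>y. b < y \<longrightarrow> x(k := Fin y) \<in> T"
    using fun_upd_Fin_in_open[OF T(1)] T(2) by metis
  obtain y where y: "in_fibre x y" "b < y" "ya \<le> y" using fibre_unbounded_above[OF x \<nu> ya(1)] by blast
  have A: "x(k := Fin y) \<in> A" using in_fibre_fun_upd_in_A[OF x y(1)] .
  moreover have "x(k := Fin y) \<noteq> x"
    using X_coordinate_PInf[OF x, of k] by (metis fun_upd_same omega.distinct(1) order_refl)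
  ultimately have "Fin (head x + rsc (\<alpha> k) ya) < f (x(k := Fin y))" using T(3) b y(2) by blast
  then have "rsc (\<alpha> k) ya < rsc (\<alpha> k) y" using f_fun_upd[OF A] by simp
  moreover have "rsc (\<alpha> k) y \<le> rsc (\<alpha> k) ya" using rsc_left_mono_neg[of "\<alpha> k" ya y] neg y(3) by simp
  ultimately show False by simp
qed

lemma Fin_the_fin_endpoint: "x \<in> X \<Longrightarrow> Fin (the_fin (endpoint x)) = endpoint x"
  using endpoint_finite Fin_the_fin by blast

lemma fibre_point_above_mu:
  assumes x: "x \<in> X" and \<mu>: "\<mu> x = Fin c"
  shows "\<exists>y. in_fibre x y \<and> c \<le> y \<and> y < c + step"
proof -
  obtain ya where ya: "in_fibre x ya" using X_fibre_nonempty[OF x] by blast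
  obtain y where y: "y \<in> Z" "y - nmul \<rho> e \<in> nmul (N k) ` Z" "c \<le> y" "y < c + step"
    using congruent_in_window_above[OF N_ge_1 Z_nmul[OF e_in_Z]] by blast
  have "c \<le> ya" using ya \<mu> unfolding in_fibre_def by simp
  then have "y \<le> ya"
    using congruent_gap[OF N_ge_1 y(2), of ya] ya y(4) unfolding in_fibre_def
    by (meson add_le_cancel_right le_less_trans not_le order.trans)
  then have "Fin y \<le> \<nu> x"
    using ya order_trans[of "Fin y" "Fin ya" "\<nu> x"] unfolding in_fibre_def by simp
  then show ?thesis using y \<mu> unfolding in_fibre_def by auto
qed

lemma fibre_point_below_nu:
  assumes x: "x \<in> X" and \<nu>: "\<nu> x = Fin c"
  shows "\<exists>y. in_fibre x y \<and> c - step < y \<and> y \<le> c"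
proof -
  obtain ya where ya: "in_fibre x ya" using X_fibre_nonempty[OF x] by blast
  obtain y where y: "y \<in> Z" "y - nmul \<rho> e \<in> nmul (N k) ` Z" "c - step < y" "y \<le> c"
    using congruent_in_window_below[OF N_ge_1 Z_nmul[OF e_in_Z]] by blast
  have "ya \<le> c" using ya \<nu> unfolding in_fibre_def by simp
  moreover have "c < y + step" using y(3) by (simp add: diff_less_eq)
  ultimately have "ya \<le> y"
    using congruent_gap[OF N_ge_1 _ y(2), of ya] ya unfolding in_fibre_def
    by (meson le_less_trans not_le)
  then have "\<mu> x \<le> Fin y"
    using ya order_trans[of "\<mu> x" "Fin ya" "Fin y"] unfolding in_fibre_def by simp
  then show ?thesis using y \<nu> unfolding in_fibre_def by auto
qed

lemma near_endpoint:
  assumes x: "x \<in> X"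
  defines "c \<equiv> the_fin (endpoint x)"
  shows "\<exists>y. in_fibre x y \<and> c - step < y \<and> y < c + step \<and> rsc (\<alpha> k) y \<le> rsc (\<alpha> k) c + slack"
proof (cases "0 \<le> \<alpha> k")
  case True
  then have "\<mu> x = Fin c" using Fin_the_fin_endpoint[OF x] c_def by simp
  then obtain y where y: "in_fibre x y" "c \<le> y" "y < c + step"
    using fibre_point_above_mu[OF x] by blast
  have "rsc (\<alpha> k) (y - c) \<le> rsc (\<alpha> k) step"
    using rsc_left_mono[OF True, of "y - c" step] y(3) by (simp add: algebra_simps)
  also have "\<dots> = slack" using True by (simp add: rsc_mult rsc_of_nat)
  finally have "rsc (\<alpha> k) y \<le> rsc (\<alpha> k) c + slack" by (simp add: rsc_diff_right algebra_simps)
  moreover have "c - step < c" using step_pos by simp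
  then have "c - step < y" using y(2) by (rule less_le_trans)
  ultimately show ?thesis using y by blast
next
  case False
  then have "\<nu> x = Fin c" using Fin_the_fin_endpoint[OF x] c_def by simp
  then obtain y where y: "in_fibre x y" "c - step < y" "y \<le> c"
    using fibre_point_below_nu[OF x] by blast
  have "rsc (- \<alpha> k) (c - y) \<le> rsc (- \<alpha> k) step"
    using rsc_left_mono[of "- \<alpha> k" "c - y" step] False y(2) by (simp add: algebra_simps)
  also have "\<dots> = slack" using False by (simp add: rsc_mult rsc_of_nat rsc_minus_left)
  finally have "rsc (\<alpha> k) y \<le> rsc (\<alpha> k) c + slack"
    by (simp add: rsc_diff_right rsc_minus_left algebra_simps)
  moreover have "c < c + step" using step_pos by simp
  then have "y < c + step" using y(3) by (rule le_less_trans[rotated])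
  ultimately show ?thesis using y by blast
qed

lemma fhat_le_f:
  assumes a: "a \<in> A"
  shows "fhat (trunc k a) \<le> f a"
proof -
  obtain y where x: "trunc k a \<in> X" and y: "in_fibre (trunc k a) y" and a_eq: "a = (trunc k a)(k := Fin y)"
    using A_fibre_decomp[OF a] by blast
  define c where "c = the_fin (endpoint (trunc k a))"
  have "rsc (\<alpha> k) c \<le> rsc (\<alpha> k) y"
  proof (cases "0 \<le> \<alpha> k")
    case True
    then show ?thesis
      using y Fin_the_fin_endpoint[OF x] rsc_left_mono[OF True, of c y]
      unfolding c_def in_fibre_def by (metis Fin_le_Fin)
  next
    case False
    then show ?thesis
      using y Fin_the_fin_endpoint[OF x] rsc_left_mono_neg[of "\<alpha> k" y c]
      unfolding c_def in_fibre_def by (metis Fin_le_Fin not_le order.strict_implies_order)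
  qed
  then show ?thesis
    using f_fun_upd[of "trunc k a" y] a a_eq unfolding c_def by (metis Fin_le_Fin add_left_mono)
qed

lemma f_min_minus_slack_le_fhat:
  assumes a: "a \<in> A" and a0: "a0 \<in> A" "\<forall>b\<in>A. f a0 \<le> f b"
  shows "Fin (the_fin (f a0) - slack) \<le> fhat (trunc k a)"
proof -
  define x where "x = trunc k a"
  have x: "x \<in> X" using a unfolding x_def socle_def by blast
  obtain y where y: "in_fibre x y" "rsc (\<alpha> k) y \<le> rsc (\<alpha> k) (the_fin (endpoint x)) + slack"
    using near_endpoint[OF x] by blast
  have A: "x(k := Fin y) \<in> A" using in_fibre_fun_upd_in_A[OF x y(1)] .
  have "f a0 = Fin (the_fin (f a0))" using f_eq a0(1) by simp
  then have "the_fin (f a0) \<le> head x + rsc (\<alpha> k) y"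
    using a0(2) A f_fun_upd[OF A] by (metis Fin_le_Fin)
  also have "\<dots> \<le> head x + rsc (\<alpha> k) (the_fin (endpoint x)) + slack"
    using y(2) by (simp add: add.assoc add_left_mono)
  finally show ?thesis unfolding x_def by (simp add: algebra_simps)
qed

lemma fhat_affine_repr:
  assumes "X \<noteq> {}"
  shows "\<exists>\<beta>' \<alpha>'. \<forall>x\<in>X. fhat x = Fin (\<beta>' + (\<Sum>i<k. rsc (\<alpha>' i) (the_fin (x i))))"
proof -
  have "A \<noteq> {}" using assms unfolding socle_def by blast
  then have "is_affine Z {..<k} X (\<lambda>x. endpoint x)"
    using presentation by (cases "0 \<le> \<alpha> k") simp_all
  moreover obtain x0 where "x0 \<in> X" using assms by blast
  ultimately obtain c0 c where c: "\<forall>x\<in>X. endpoint x = Fin (c0 + (\<Sum>i<k. rsc (c i) (the_fin (x i))))"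
    using endpoint_finite unfolding is_affine_def by blast
  have "fhat x = Fin ((\<beta> + rsc (\<alpha> k) c0) + (\<Sum>i<k. rsc (\<alpha> i + \<alpha> k * c i) (the_fin (x i))))"
    if "x \<in> X" for x
  proof -
    have "rsc (\<alpha> k) (the_fin (endpoint x))
        = rsc (\<alpha> k) c0 + (\<Sum>i<k. rsc (\<alpha> k * c i) (the_fin (x i)))"
      using c that by (simp add: rsc_add_right rsc_sum_right rsc_mult)
    moreover have "(\<Sum>i<k. rsc (\<alpha> i + \<alpha> k * c i) (the_fin (x i)))
        = (\<Sum>i<k. rsc (\<alpha> i) (the_fin (x i))) + (\<Sum>i<k. rsc (\<alpha> k * c i) (the_fin (x i)))"
      by (simp add: rsc_add_left sum.distrib)
    ultimately show ?thesis by (simp add: algebra_simps)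
  qed
  then show ?thesis
    by (intro exI[of _ "\<beta> + rsc (\<alpha> k) c0"] exI[of _ "\<lambda>i. \<alpha> i + \<alpha> k * c i"] ballI) simp
qed

lemma fhat_affine: "is_affine Z {..<k} X fhat"
proof (cases "X = {}")
  case False
  then show ?thesis using fhat_affine_repr X_subset_FI unfolding is_affine_def by blast
qed (use X_subset_FI in \<open>simp add: is_affine_def\<close>)

lemma X_isolated:
  assumes p: "p \<in> X"
  shows "\<exists>U. open U \<and> p \<in> U \<and> U \<inter> X \<subseteq> {p}"
proof -
  define U where "U = {z. \<forall>i\<in>{..<k}. z i \<in> {Fin (the_fin (p i) - e) <..< Fin (the_fin (p i) + e)}}"
  have "open U" unfolding U_def by (rule open_Collect_finite_box) auto
  moreover have "p \<in> U"
  proof -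
    have "p i \<in> {Fin (the_fin (p i) - e) <..< Fin (the_fin (p i) + e)}" if i: "i < k" for i
    proof -
      obtain z where "p i = Fin z" using X_coordinate_Fin[OF p i] by blast
      then show ?thesis using e_pos by simp
    qed
    then show ?thesis unfolding U_def by simp
  qed
  moreover have "U \<inter> X \<subseteq> {p}"
  proof
    fix y assume y: "y \<in> U \<inter> X"
    have "y i = p i" for i
    proof (cases "i < k")
      case True
      obtain z where z: "z \<in> Z" "p i = Fin z" using X_coordinate_Fin[OF p True] by blast
      obtain w where w: "w \<in> Z" "y i = Fin w" using X_coordinate_Fin[of y i] y True by blast
      have "y i \<in> {Fin (the_fin (p i) - e) <..< Fin (the_fin (p i) + e)}"
        using y True unfolding U_def by blast
      then have "z - e < w" "w < z + e" using z w by simp_all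
      then show ?thesis using Z_eq_if_close[OF w(1) z(1)] z w by simp
    next
      case False
      then show ?thesis using X_coordinate_PInf[OF p, of i] X_coordinate_PInf[of y i] y by simp
    qed
    then show "y \<in> {p}" by (simp add: fun_eq_iff)
  qed
  ultimately show ?thesis by blast
qed

lemma at_within_X_eq_bot: "p \<in> X \<Longrightarrow> at p within X = bot"
proof -
  assume "p \<in> X"
  then obtain U where "open U" "p \<in> U" "U \<inter> X \<subseteq> {p}" using X_isolated by blast
  then have "\<not> p islimpt X" unfolding islimpt_def by blast
  then show ?thesis using trivial_limit_within by blast
qed

lemma closure_X_coordinate_PInf:
  assumes "q \<in> closure X" "k \<le> i"
  shows "q i = PInf"
proof -
  have "closure X \<subseteq> {z. z i = PInf}"
    using X_coordinate_PInf assms(2) by (intro closure_minimal closed_Collect_coordinate_eq) blast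
  then show ?thesis using assms(1) by blast
qed

lemma endpoint_tendsto:
  assumes "q \<in> closure X"
  shows "\<exists>l. ((\<lambda>x. endpoint x) \<longlongrightarrow> l) (at q within X)"
proof -
  have "A \<noteq> {}" using assms unfolding socle_def by auto
  then have "lcont X (\<lambda>x. endpoint x)" using presentation by (cases "0 \<le> \<alpha> k") simp_all
  then obtain h where "continuous_on (closure X) h" "\<forall>y\<in>X. h y = endpoint y"
    unfolding lcont_def by blast
  then show ?thesis
    using tendsto_continuous_extension[of X h "\<lambda>x. endpoint x" q] assms by auto
qed

definition fibre_choice :: "(nat \<Rightarrow> 'a omega) \<Rightarrow> 'a" where
  "fibre_choice x = (SOME y. in_fibre x y \<and> the_fin (endpoint x) - step < y \<and>
     y < the_fin (endpoint x) + step \<and> rsc (\<alpha> k) y \<le> rsc (\<alpha> k) (the_fin (endpoint x)) + slack)"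

abbreviation "lift x \<equiv> x(k := Fin (fibre_choice x))"

lemma fibre_choice:
  assumes "x \<in> X"
  shows "in_fibre x (fibre_choice x)"
    and "the_fin (endpoint x) - step < fibre_choice x" "fibre_choice x < the_fin (endpoint x) + step"
    and "rsc (\<alpha> k) (fibre_choice x) \<le> rsc (\<alpha> k) (the_fin (endpoint x)) + slack"
  using someI_ex[OF near_endpoint[OF assms]] unfolding fibre_choice_def by blast+

lemma lift_in_A: "x \<in> X \<Longrightarrow> lift x \<in> A"
  using in_fibre_fun_upd_in_A fibre_choice(1) by blast

lemma fhat_tendsto_PInf_if_lift:
  assumes "((\<lambda>x. f (lift x)) \<longlongrightarrow> PInf) (at q within X)"
  shows "((\<lambda>x. fhat x) \<longlongrightarrow> PInf) (at q within X)"
  unfolding tendsto_PInf_iff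
proof
  fix L
  have "eventually (\<lambda>x. Fin (L + slack) < f (lift x)) (at q within X)"
    using assms unfolding tendsto_PInf_iff by blast
  then have "eventually (\<lambda>x. Fin (L + slack) < f (lift x) \<and> x \<in> X) (at q within X)"
    using eventually_at_within_in by (rule eventually_conj)
  then show "eventually (\<lambda>x. Fin L < fhat x) (at q within X)"
  proof (rule eventually_mono)
    fix x assume "Fin (L + slack) < f (lift x) \<and> x \<in> X"
    then have x: "x \<in> X" and "Fin (L + slack) < f (lift x)" by blast+
    then have "L + slack < head x + rsc (\<alpha> k) (fibre_choice x)"
      using f_fun_upd[OF lift_in_A[OF x]] by simp
    also have "\<dots> \<le> head x + rsc (\<alpha> k) (the_fin (endpoint x)) + slack"
      using fibre_choice(4) x by (simp add: add.assoc add_left_mono)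
    finally show "Fin L < fhat x" by simp
  qed
qed

lemma f_comp_tendsto_PInf:
  assumes g: "(g \<longlongrightarrow> p) F" and F: "F \<noteq> bot"
    and in_A: "eventually (\<lambda>x. g x \<in> A) F" and p: "p \<notin> A"
  shows "((\<lambda>x. f (g x)) \<longlongrightarrow> PInf) F"
proof -
  have "eventually (\<lambda>x. g x \<in> closure A) F"
    using in_A by (rule eventually_mono) (use closure_subset in blast)
  then have "p \<in> closure A" using Lim_in_closed_set[OF closed_closure _ F g] by blast
  then have "filterlim f (nhds PInf) (at p within A)" using f_diverges p by blast
  moreover have "filterlim g (at p within A) F"
  proof (rule filterlim_at_withinI[OF g])
    show "eventually (\<lambda>x. g x \<in> A - {p}) F"
      using in_A by (rule eventually_mono) (use p in blast)
  qed
  ultimately show ?thesis by (rule filterlim_compose)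
qed

context
  fixes q assumes q: "q \<in> closure X" "q \<notin> X"
begin

lemma q_coordinate_PInf: "k \<le> i \<Longrightarrow> q i = PInf"
  using closure_X_coordinate_PInf q(1) by blast

lemma q_not_in_A: "q \<notin> A"
  using A_last_not_PInf q_coordinate_PInf by blast

lemma at_q_within_X_nontrivial: "at q within X \<noteq> bot"
  using q by (simp add: at_within_eq_bot_iff insert_absorb)

lemma fun_upd_q_not_in_A: "q(k := c) \<notin> A"
proof
  assume "q(k := c) \<in> A"
  then have "trunc k (q(k := c)) \<in> X" unfolding socle_def by blast
  moreover have "trunc k q = q" using q_coordinate_PInf by (auto simp: trunc_def fun_eq_iff)
  ultimately show False using q(2) trunc_fun_upd[of q c] by metis
qed

lemma lift_tendsto_if_endpoint_PInf:
  assumes endpoint: "((\<lambda>x. endpoint x) \<longlongrightarrow> PInf) (at q within X)"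
  shows "(lift \<longlongrightarrow> q) (at q within X)"
proof (rule tendsto_coordinatewise)
  have choice: "((\<lambda>x. Fin (fibre_choice x)) \<longlongrightarrow> PInf) (at q within X)"
    unfolding tendsto_PInf_iff
  proof
    fix l
    have "eventually (\<lambda>x. Fin (l + step) < endpoint x) (at q within X)"
      using endpoint unfolding tendsto_PInf_iff by blast
    then have "eventually (\<lambda>x. Fin (l + step) < endpoint x \<and> x \<in> X) (at q within X)"
      using eventually_at_within_in by (rule eventually_conj)
    then show "eventually (\<lambda>x. Fin l < Fin (fibre_choice x)) (at q within X)"
    proof (rule eventually_mono)
      fix x assume x: "Fin (l + step) < endpoint x \<and> x \<in> X"
      then have "l + step < the_fin (endpoint x)"
        using Fin_the_fin_endpoint[of x] by (metis Fin_less_Fin)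
      then have "l < the_fin (endpoint x) - step" by (simp add: less_diff_eq)
      then show "Fin l < Fin (fibre_choice x)"
        using fibre_choice(2)[of x] x by (simp add: less_trans)
    qed
  qed
  show "((\<lambda>x. (lift x) i) \<longlongrightarrow> q i) (at q within X)" for i
    using choice q_coordinate_PInf[of k] tendsto_coordinate[of i q X] by (cases "i = k") simp_all
qed

lemma f_lift_tendsto_PInf_unbounded:
  assumes "((\<lambda>x. endpoint x) \<longlongrightarrow> PInf) (at q within X)"
  shows "((\<lambda>x. f (lift x)) \<longlongrightarrow> PInf) (at q within X)"
proof (rule f_comp_tendsto_PInf[OF lift_tendsto_if_endpoint_PInf[OF assms]])
  show "eventually (\<lambda>x. lift x \<in> A) (at q within X)"
    using lift_in_A by (simp add: eventually_at_filter)
qed (use at_q_within_X_nontrivial q_not_in_A in auto)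

lemma f_fun_upd_eventually_large:
  "eventually (\<lambda>x. x(k := Fin t) \<in> A \<longrightarrow> Fin L < f (x(k := Fin t))) (at q within X)"
proof -
  define Y where "Y = {x \<in> X. x(k := Fin t) \<in> A}"
  have "eventually (\<lambda>x. Fin L < f (x(k := Fin t))) (at q within Y)"
  proof (cases "at q within Y = bot")
    case False
    have "eventually (\<lambda>x. x(k := Fin t) \<in> A) (at q within Y)"
      by (simp add: eventually_at_filter Y_def)
    then have "((\<lambda>x. f (x(k := Fin t))) \<longlongrightarrow> PInf) (at q within Y)"
      using f_comp_tendsto_PInf[OF tendsto_fun_upd_const False _ fun_upd_q_not_in_A] by blast
    then show ?thesis unfolding tendsto_PInf_iff by blast
  qed simp
  then show ?thesis
    unfolding eventually_at_filter Y_def by (rule eventually_mono) simp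
qed

text \<open>When the endpoint stays bounded, the chosen fibre points range over a finite subset
of \<open>Z\<close>, so the divergence at the finitely many points \<open>q(k := t)\<close> suffices.\<close>

lemma f_lift_tendsto_PInf_bounded:
  assumes endpoint: "((\<lambda>x. endpoint x) \<longlongrightarrow> Fin c) (at q within X)"
  shows "((\<lambda>x. f (lift x)) \<longlongrightarrow> PInf) (at q within X)"
  unfolding tendsto_PInf_iff
proof
  fix L
  define lo where "lo = c - e - step"
  define T where "T = Z \<inter> {lo .. lo + nmul (N k + N k + 2) e}"
  have "lo + nmul (N k + N k + 2) e = c + e + step"
    by (simp add: lo_def nmul_add_left numeral_2_eq_2 nmul_Suc algebra_simps)
  then have choice_in_T: "fibre_choice x \<in> T"
    if "x \<in> X" "Fin (c - e) < endpoint x" "endpoint x < Fin (c + e)" for x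
    using that fibre_choice(1-3)[OF that(1)] Fin_the_fin_endpoint[OF that(1)]
    unfolding T_def lo_def in_fibre_def
    by (smt (verit, ccfv_threshold) Fin_less_Fin IntI add_strict_right_mono atLeastAtMost_iff
        diff_strict_right_mono less_imp_le less_trans)
  have near: "eventually (\<lambda>x. Fin (c - e) < endpoint x \<and> endpoint x < Fin (c + e)) (at q within X)"
    using endpoint e_pos unfolding order_tendsto_iff by (simp add: eventually_conj)
  have "eventually (\<lambda>x. \<forall>t\<in>T. x(k := Fin t) \<in> A \<longrightarrow> Fin L < f (x(k := Fin t))) (at q within X)"
    using f_fun_upd_eventually_large finite_Z_atLeastAtMost unfolding T_def
    by (simp add: eventually_ball_finite)
  then have "eventually (\<lambda>x. (\<forall>t\<in>T. x(k := Fin t) \<in> A \<longrightarrow> Fin L < f (x(k := Fin t))) \<and>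
      (Fin (c - e) < endpoint x \<and> endpoint x < Fin (c + e)) \<and> x \<in> X) (at q within X)"
    using near eventually_at_within_in[of X q] by (simp add: eventually_conj_iff)
  then show "eventually (\<lambda>x. Fin L < f (lift x)) (at q within X)"
    by (rule eventually_mono) (use choice_in_T lift_in_A in blast)
qed

lemma fhat_tendsto_PInf: "((\<lambda>x. fhat x) \<longlongrightarrow> PInf) (at q within X)"
proof -
  obtain l where "((\<lambda>x. endpoint x) \<longlongrightarrow> l) (at q within X)" using endpoint_tendsto q(1) by blast
  then show ?thesis
    using f_lift_tendsto_PInf_unbounded f_lift_tendsto_PInf_bounded fhat_tendsto_PInf_if_lift
    by (cases l) auto
qed

end

lemma fhat_lcont: "lcont X (\<lambda>x. fhat x)"
  by (rule lcont_if_isolated_and_tendsto[OF X_isolated fhat_tendsto_PInf])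

lemma fhat_tendsto_PInf_pfrontier:
  assumes "p \<in> pfrontier X"
  shows "((\<lambda>x. fhat x) \<longlongrightarrow> PInf) (at p within X)"
proof (cases "p \<in> X")
  case True
  then show ?thesis by (simp add: at_within_X_eq_bot)
next
  case False
  have "p \<in> closure X"
    using assms closure_mono[of "closure X - X" "closure X"] unfolding pfrontier_def by auto
  then show ?thesis using fhat_tendsto_PInf False by blast
qed

lemma f_has_min_if_fhat_has_min:
  assumes x0: "x0 \<in> X" and min: "\<forall>x\<in>X. fhat x0 \<le> fhat x"
  shows "\<exists>a0\<in>A. \<forall>b\<in>A. f a0 \<le> f b"
proof -
  define F where "F a = \<beta> + (\<Sum>i<m. rsc (\<alpha> i) (the_fin (a i)))" for a
  define M where "M = head x0 + rsc (\<alpha> k) (the_fin (endpoint x0))"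
  have f_F: "f a = Fin (F a)" if "a \<in> A" for a using f_eq that F_def by simp
  have M_le: "M \<le> F a" if a: "a \<in> A" for a
  proof -
    have "trunc k a \<in> X" using a unfolding socle_def by blast
    then have "fhat x0 \<le> f a" using min fhat_le_f[OF a] order_trans by blast
    then show ?thesis using f_F[OF a] M_def by simp
  qed
  have lift: "lift x0 \<in> A" using lift_in_A[OF x0] .
  have "F (lift x0) = head x0 + rsc (\<alpha> k) (fibre_choice x0)"
    using f_fun_upd[OF lift] f_F[OF lift] by simp
  also have "\<dots> \<le> M + slack"
    using fibre_choice(4)[OF x0] unfolding M_def by (simp add: add.assoc add_left_mono)
  finally have lift_le: "F (lift x0) \<le> M + slack" .
  define V where "V = {v. \<exists>a\<in>A. v = F a \<and> M \<le> v \<and> v \<le> M + slack}"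
  have "finite V"
    unfolding V_def F_def by (rule finite_affine_values_in_interval[OF A_subset]) simp
  moreover have lift_V: "F (lift x0) \<in> V" unfolding V_def using lift lift_le M_le by blast
  ultimately have "Min V \<in> V" using Min_in by blast
  then obtain a0 where a0: "a0 \<in> A" "Min V = F a0" unfolding V_def by blast
  have "F a0 \<le> F b" if "b \<in> A" for b
  proof (cases "F b \<le> M + slack")
    case True
    then have "F b \<in> V" using that M_le unfolding V_def by blast
    then show ?thesis using Min_le[OF \<open>finite V\<close>] a0(2) by simp
  next
    case False
    then show ?thesis
      using Min_le[OF \<open>finite V\<close> lift_V] a0(2) lift_le by simp
  qed
  then show ?thesis using a0(1) f_F by (metis Fin_le_Fin)
qed

end

lemma lc_precell_affine_has_min:
  fixes Z :: "'a::linordered_ab_group_add set" and f :: "(nat \<Rightarrow> 'a omega) \<Rightarrow> 'a omega"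
  assumes "zgroup_hull Z e" "\<forall>i<m. 0 < N i" "A \<subseteq> FI Z {..<m}" "lc_precell Z e m N A"
    and "\<forall>a\<in>A. f a = Fin (\<beta> + (\<Sum>i<m. rsc (\<alpha> i) (the_fin (a i))))"
    and "\<forall>p\<in>closure A - A. filterlim f (nhds PInf) (at p within A)"
    and "A \<noteq> {}"
  shows "\<exists>a0\<in>A. \<forall>b\<in>A. f a0 \<le> f b"
  using assms
proof (induction m arbitrary: A f \<alpha> \<beta>)
  case 0
  then show ?case by simp
next
  case (Suc k)
  obtain \<mu> \<nu> \<rho> where pres: "lc_pres Z e (Suc k) N A \<mu> \<nu> \<rho>" using Suc.prems(4) by auto
  interpret cell Z e "Suc k" k N A \<mu> \<nu> f \<rho> \<alpha> \<beta>
    by unfold_locales (use Suc.prems pres in auto)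
  have X: "X \<noteq> {}" using Suc.prems(7) unfolding socle_def by blast
  have "\<exists>x0\<in>X. \<forall>x\<in>X. fhat x0 \<le> fhat x"
  proof (cases k)
    case 0
    then have "X = {\<lambda>_. PInf}" using X unfolding socle_def trunc_def by auto
    then show ?thesis by simp
  next
    case (Suc k')
    obtain \<beta>' \<alpha>' where "\<forall>x\<in>X. fhat x = Fin (\<beta>' + (\<Sum>i<k. rsc (\<alpha>' i) (the_fin (x i))))"
      using fhat_affine_repr[OF X] by blast
    moreover have "\<forall>p\<in>closure X - X. filterlim (\<lambda>x. fhat x) (nhds PInf) (at p within X)"
      using fhat_tendsto_PInf by blast
    moreover have "lc_precell Z e k N X" using Suc.prems(4) by simp
    ultimately show ?thesis
      using Suc.IH[where A=X and f="\<lambda>x. fhat x" and \<alpha>=\<alpha>' and \<beta>=\<beta>'] Suc.prems(1,2) X_subset_FI X by simp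
  qed
  then show ?case using f_has_min_if_fhat_has_min by blast
qed

theorem lemma4p2:
  fixes Z :: "'a::linordered_ab_group_add set" and e :: 'a
    and m :: nat and N :: "nat \<Rightarrow> nat"
    and A :: "(nat \<Rightarrow> 'a omega) set"
    and \<mu> \<nu> f :: "(nat \<Rightarrow> 'a omega) \<Rightarrow> 'a omega" and \<rho> :: nat
    and \<alpha> :: "nat \<Rightarrow> rat" and \<beta> :: 'a
  assumes hull: "zgroup_hull Z e"
    and m: "1 \<le> m"
    and Npos: "\<forall>i<m. 0 < N i"
    and AZ: "A \<subseteq> FI Z {..<m}"
    and precell: "lc_precell Z e m N A"
    and pres: "lc_pres Z e m N A \<mu> \<nu> \<rho>"
    and f_aff: "is_affine Z {..<m} A f"
    and f_lc: "lcont A f"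
    and f_bd: "\<forall>h. continuous_on (closure A) h \<and> (\<forall>a\<in>A. h a = f a)
                 \<longrightarrow> (\<forall>p\<in>pfrontier A. h p = PInf)"
    and f_eq: "\<forall>a\<in>A. f a = Fin (\<beta> + (\<Sum>i<m. rsc (\<alpha> i) (the_fin (a i))))"
  shows
    "let X = socle (m - 1) A;
         fhat = (\<lambda>x. Fin (\<beta> + (\<Sum>i<m - 1. rsc (\<alpha> i) (the_fin (x i)))
                    + rsc (\<alpha> (m - 1))
                        (the_fin (if 0 \<le> \<alpha> (m - 1) then \<mu> x else \<nu> x))))
     in (\<forall>x\<in>X. (if 0 \<le> \<alpha> (m - 1) then \<mu> x else \<nu> x) \<noteq> PInf)
      \<and> is_affine Z {..<m - 1} X fhat \<and> lcont X fhat
      \<and> (\<forall>p\<in>pfrontier X. filterlim fhat (nhds PInf) (at p within X))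
      \<and> (\<forall>a\<in>A. \<exists>a0\<in>A. (\<forall>b\<in>A. f a0 \<le> f b)
            \<and> Fin (the_fin (f a0) - rsc (\<bar>\<alpha> (m - 1)\<bar> * of_nat (N (m - 1))) e)
                 \<le> fhat (trunc (m - 1) a)
            \<and> fhat (trunc (m - 1) a) \<le> f a)"
proof -
  define k where "k = m - 1"
  have m_eq: "m = Suc k" using m k_def by simp
  have f_diverges: "\<forall>p\<in>closure A - A. filterlim f (nhds PInf) (at p within A)"
    using tendsto_at_pfrontier_if_extension_eq[OF f_lc f_bd] by blast
  interpret cell Z e m k N A \<mu> \<nu> f \<rho> \<alpha> \<beta>
    by unfold_locales (use hull m_eq Npos AZ pres f_eq f_diverges in auto)
  have "\<exists>a0\<in>A. \<forall>b\<in>A. f a0 \<le> f b" if "a \<in> A" for a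
    using lc_precell_affine_has_min[OF hull Npos AZ precell f_eq f_diverges] that by blast
  then show ?thesis
    unfolding Let_def k_def[symmetric]
    using endpoint_finite fhat_affine fhat_lcont fhat_tendsto_PInf_pfrontier
      f_min_minus_slack_le_fhat fhat_le_f
    by blast
qed
end
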